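(* Let $(X,+,d)$ be an Abelian metric group with translation-invariant metric $d$ such that every non-empty open ball in $X$ contains infinitely many elements. Then (i) the family $\{A\subset X:\ A\text{ is finite and } S(A)\neq\{0\}\}$ is dense in $K(X)$; (ii) the family $NT(X)$ is dense in $K(X)$.
   Context: $d$ satisfies $d(x,y)=d(x+z,y+z)$ for all $x,y,z\in X$; $0$ is the neutral element. $K(X)$ is the family of non-empty compact subsets of $X$ with the Pompeiu–Hausdorff metric $d_H(A,B)=\max\{\sup_{a\in A}d(a,B),\sup_{b\in B}d(A,b)\}$. The spectre of $A\subset X$ is $S(A):=\{z\in X:\ \forall_{a\in A}\ (a+z\in A \text{ or } a-z\in A)\}$. A set $A\subset X$ is a net-set if it is finite, has at least three elements, and for every pair of distinct two-element subsets $\{z,t\}\neq\{u,v\}$ of $A$ we have $\{z-t,t-z\}\cap\{v-u,u-v\}=\emptyset$; $NT(X)$ is the family of all net-sets. *)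

theory Defs
  imports "HOL-Analysis.Analysis"
begin

text \<open>Pompeiu--Hausdorff distance, as in the paper (used on non-empty compact sets,
  where both suprema are finite); d(a,B) is the library notion infdist a B.\<close>
definition hausdist :: "'a::metric_space set \<Rightarrow> 'a set \<Rightarrow> real" where
  "hausdist A B = max (SUP a\<in>A. infdist a B) (SUP b\<in>B. infdist b A)"

definition spectre :: "'a::ab_group_add set \<Rightarrow> 'a set" where
  "spectre A = {z. \<forall>a\<in>A. a + z \<in> A \<or> a - z \<in> A}"

definition net_set :: "'a::ab_group_add set \<Rightarrow> bool" where
  "net_set A \<longleftrightarrow> finite A \<and> card A \<ge> 3 \<and>
     (\<forall>z\<in>A. \<forall>t\<in>A. \<forall>u\<in>A. \<forall>v\<in>A. z \<noteq> t \<longrightarrow> u \<noteq> v \<longrightarrow> {z, t} \<noteq> {u, v} \<longrightarrow>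
        {z - t, t - z} \<inter> {v - u, u - v} = {})"

end

theory Submission
  imports Defs
begin

text \<open>
  Every non-empty compact K is within \<open>\<epsilon>/3\<close> of a finite subset F of it, so it suffices to
  approximate finite sets.  (i) For small z \<noteq> 0 the set F \<union> (F + z) is close to F, and z lies
  in its spectre.  (ii) Replace the points p of F one at a time by nearby new points x with
  x \<notin> {b + u - v} and 2x \<notin> {b + b' | b \<noteq> b'}, over the points b, b', u, v chosen before: a
  ball has infinitely many points, so it avoids the finitely many values b + u - v, and 2x stays
  close to 2p, which is kept off the finite set of pair sums.  The result satisfies a Sidon-type
  condition equivalent to being a net-set.
\<close>

text \<open>The net-set condition, after rewriting z - t = u - v as z + v = u + t: Sidon's condition,
  except that 2a = 2c with a \<noteq> c is tolerated.\<close>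
definition weak_sidon :: "'a::ab_group_add set \<Rightarrow> bool" where
  "weak_sidon B \<longleftrightarrow>
     (\<forall>a\<in>B. \<forall>b\<in>B. \<forall>c\<in>B. \<forall>d\<in>B. a + b = c + d \<longrightarrow> {a, b} = {c, d} \<or> (a = b \<and> c = d))"

definition pair_sums :: "'a::ab_group_add set \<Rightarrow> 'a set" where
  "pair_sums B = {b + b' | b b'. b \<in> B \<and> b' \<in> B \<and> b \<noteq> b'}"

lemma finite_pair_sums: "finite B \<Longrightarrow> finite (pair_sums B)"
proof -
  assume "finite B"
  moreover have "pair_sums B \<subseteq> (\<lambda>(b, b'). b + b') ` (B \<times> B)"
    unfolding pair_sums_def by auto
  ultimately show ?thesis by (meson finite_SigmaI finite_imageI finite_subset)
qed

lemma pair_sums_insert: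
  "x \<notin> B \<Longrightarrow> pair_sums (insert x B) = pair_sums B \<union> (\<lambda>b. x + b) ` B"
  unfolding pair_sums_def by (auto simp: add.commute)

lemma weak_sidon_imp_net_set:
  assumes "weak_sidon B" "finite B" "card B \<ge> 3"
  shows "net_set B"
  unfolding net_set_def
proof (intro conjI ballI impI)
  fix z t u v assume B: "z \<in> B" "t \<in> B" "u \<in> B" "v \<in> B"
    and "z \<noteq> t" "u \<noteq> v" "{z, t} \<noteq> {u, v}"
  have "z + u \<noteq> v + t" "z + v \<noteq> u + t" "t + u \<noteq> v + z" "t + v \<noteq> u + z"
    using assms(1) B \<open>z \<noteq> t\<close> \<open>u \<noteq> v\<close> \<open>{z, t} \<noteq> {u, v}\<close> unfolding weak_sidon_def
    by (smt (verit) doubleton_eq_iff insert_commute)+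
  then show "{z - t, t - z} \<inter> {v - u, u - v} = {}"
    by (auto simp: algebra_simps)
qed (use assms in auto)

lemma weak_sidon_insert:
  assumes "weak_sidon B"
    and new_sum: "\<And>b u v. b \<in> B \<Longrightarrow> u \<in> B \<Longrightarrow> v \<in> B \<Longrightarrow> x + v \<noteq> b + u"
    and new_double: "x + x \<notin> pair_sums B"
  shows "weak_sidon (insert x B)"
  unfolding weak_sidon_def
proof (intro ballI impI)
  have sum_with_x: "x + b \<noteq> c + d" "b + x \<noteq> c + d" if "b \<in> B" "c \<in> B" "d \<in> B" for b c d
    using new_sum[OF that(2,3,1)] by (auto simp: add.commute)
  have double_x: "c = d" if "x + x = c + d" "c \<in> B" "d \<in> B" for c d
    using new_double that unfolding pair_sums_def by auto
  have x_on_one_side: "a = b \<and> c = d"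
    if "a = x \<or> b = x" "a \<in> insert x B" "b \<in> insert x B" "c \<in> B" "d \<in> B" "a + b = c + d"
    for a b c d
  proof (cases "a = b")
    case True
    then show ?thesis using that double_x by auto
  next
    case False
    then have "a \<in> B \<and> b = x \<or> a = x \<and> b \<in> B" using that(1-3) by auto
    then show ?thesis using that(4-6) sum_with_x by auto
  qed
  fix a b c d assume a: "a \<in> insert x B" and b: "b \<in> insert x B"
    and c: "c \<in> insert x B" and d: "d \<in> insert x B" and eq: "a + b = c + d"
  consider "a \<in> B" "b \<in> B" "c \<in> B" "d \<in> B" | "a = x \<or> b = x" "c \<in> B" "d \<in> B"
    | "c = x \<or> d = x" "a \<in> B" "b \<in> B" | "a = x \<or> b = x" "c = x \<or> d = x"
    using a b c d by blast
  then show "{a, b} = {c, d} \<or> (a = b \<and> c = d)"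
  proof cases
    case 1
    then show ?thesis using assms(1) eq unfolding weak_sidon_def by blast
  next
    case 2
    then show ?thesis using x_on_one_side a b eq by blast
  next
    case 3
    then show ?thesis using x_on_one_side c d eq[symmetric] by blast
  next
    case 4
    then show ?thesis using eq by (elim disjE) (auto simp: add.commute[of _ x])
  qed
qed

lemma dist_add_add_le:
  fixes x y u v :: "'a::{ab_group_add, metric_space}"
  assumes translation_invariant: "\<And>x y z :: 'a. dist x y = dist (x + z) (y + z)"
  shows "dist (x + u) (y + v) \<le> dist x y + dist u v"
proof -
  have "dist (x + u) (y + v) \<le> dist (x + u) (y + u) + dist (y + u) (y + v)"
    by (rule dist_triangle)
  also have "\<dots> = dist x y + dist u v"
    using translation_invariant[of x y u] translation_invariant[of u v y] by (simp add: add.commute)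
  finally show ?thesis .
qed

lemma obtain_point_avoiding_finite:
  fixes p :: "'a::metric_space"
  assumes "infinite (ball p r)" "finite E"
  obtains x where "dist p x < r" "x \<notin> E"
proof -
  have "ball p r - E \<noteq> {}"
    using infinite_imp_nonempty[OF Diff_infinite_finite[OF assms(2,1)]] .
  then obtain x where "x \<in> ball p r" "x \<notin> E" by blast
  then show ?thesis using that by simp
qed

lemma weak_sidon_extend:
  fixes p :: "'a::{ab_group_add, metric_space}"
  assumes translation_invariant: "\<And>x y z :: 'a. dist x y = dist (x + z) (y + z)"
    and infinite_balls: "\<And>(x::'a) r. r > 0 \<Longrightarrow> infinite (ball x r)"
    and "finite B" "finite Q" "p \<in> Q" "\<delta> > 0"
    and "weak_sidon B" and no_double: "pair_sums B \<inter> (\<lambda>q. q + q) ` Q = {}"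
  obtains x where "dist p x < \<delta>" "x \<notin> B" "weak_sidon (insert x B)"
    "pair_sums (insert x B) \<inter> (\<lambda>q. q + q) ` Q = {}"
proof -
  obtain r where r: "r > 0" "\<And>s. s \<in> pair_sums B \<Longrightarrow> s \<noteq> p + p \<Longrightarrow> r \<le> dist (p + p) s"
    using finite_set_avoid[OF finite_pair_sums[OF \<open>finite B\<close>], of "p + p"] by blast
  define E where "E = (\<lambda>(b, u, v). b + u - v) ` (B \<times> B \<times> B) \<union> (\<lambda>(q, b). q + q - b) ` (Q \<times> B)"
  have "finite E" unfolding E_def using \<open>finite B\<close> \<open>finite Q\<close> by auto
  moreover have "min \<delta> (r / 2) > 0" using \<open>\<delta> > 0\<close> r(1) by simp
  ultimately obtain x where x: "dist p x < min \<delta> (r / 2)" "x \<notin> E"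
    using obtain_point_avoiding_finite infinite_balls by metis
  have new_sum: "x + v \<noteq> b + u" if "b \<in> B" "u \<in> B" "v \<in> B" for b u v
  proof
    assume "x + v = b + u"
    then have "x = b + u - v" by (simp add: algebra_simps)
    then show False using x(2) that unfolding E_def by force
  qed
  have "dist (p + p) (x + x) < r"
    using dist_add_add_le[OF translation_invariant, of p p x x] x(1) by linarith
  then have "x + x \<notin> pair_sums B"
    using r no_double \<open>p \<in> Q\<close> by fastforce
  then have "weak_sidon (insert x B)"
    using weak_sidon_insert[OF \<open>weak_sidon B\<close> new_sum] by blast
  moreover have "x \<notin> B" using new_sum by blast
  moreover have "q + q \<noteq> x + b" if "b \<in> B" "q \<in> Q" for b q
  proof
    assume "q + q = x + b"
    then have "x = q + q - b" by (simp add: algebra_simps)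
    then show False using x(2) that unfolding E_def by force
  qed
  then have "pair_sums (insert x B) \<inter> (\<lambda>q. q + q) ` Q = {}"
    using no_double pair_sums_insert[OF \<open>x \<notin> B\<close>] by auto
  ultimately show ?thesis using that[of x] x(1) by simp
qed

text \<open>The invariant on pair_sums is what lets the induction go on: it keeps p + p off
  pair_sums B for every p in Q, even when doubling is far from injective.\<close>
lemma weak_sidon_near_list:
  fixes cs :: "'a::{ab_group_add, metric_space} list"
  assumes translation_invariant: "\<And>x y z :: 'a. dist x y = dist (x + z) (y + z)"
    and infinite_balls: "\<And>(x::'a) r. r > 0 \<Longrightarrow> infinite (ball x r)"
    and "set cs \<subseteq> Q" "finite Q" "\<delta> > 0"
  shows "\<exists>B. finite B \<and> card B = length cs \<and> weak_sidon B
    \<and> pair_sums B \<inter> (\<lambda>q. q + q) ` Q = {}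
    \<and> (\<forall>c\<in>set cs. \<exists>b\<in>B. dist c b < \<delta>) \<and> (\<forall>b\<in>B. \<exists>c\<in>set cs. dist b c < \<delta>)"
  using \<open>set cs \<subseteq> Q\<close>
proof (induction cs)
  case Nil
  show ?case by (intro exI[of _ "{}"]) (simp add: weak_sidon_def pair_sums_def)
next
  case (Cons p cs)
  then obtain B where B: "finite B" "card B = length cs" "weak_sidon B"
    "pair_sums B \<inter> (\<lambda>q. q + q) ` Q = {}"
    "\<forall>c\<in>set cs. \<exists>b\<in>B. dist c b < \<delta>" "\<forall>b\<in>B. \<exists>c\<in>set cs. dist b c < \<delta>"
    by auto
  obtain x where x: "dist p x < \<delta>" "x \<notin> B" "weak_sidon (insert x B)"
    "pair_sums (insert x B) \<inter> (\<lambda>q. q + q) ` Q = {}"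
    using weak_sidon_extend[OF translation_invariant infinite_balls B(1) \<open>finite Q\<close> _ \<open>\<delta> > 0\<close> B(3,4)]
      Cons.prems by auto
  show ?case
  proof (intro exI[of _ "insert x B"] conjI)
    show "card (insert x B) = length (p # cs)" using B(1,2) x(2) by simp
    show "\<forall>c\<in>set (p # cs). \<exists>b\<in>insert x B. dist c b < \<delta>"
      using B(5) x(1) by auto
    show "\<forall>b\<in>insert x B. \<exists>c\<in>set (p # cs). dist b c < \<delta>"
      using B(6) x(1) by (auto simp: dist_commute)
  qed (use B(1) x(3,4) in auto)
qed

lemma net_set_near_finite:
  fixes F :: "'a::{ab_group_add, metric_space} set"
  assumes translation_invariant: "\<And>x y z :: 'a. dist x y = dist (x + z) (y + z)"
    and infinite_balls: "\<And>(x::'a) r. r > 0 \<Longrightarrow> infinite (ball x r)"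
    and "finite F" "F \<noteq> {}" "\<delta> > 0"
  shows "\<exists>B. net_set B \<and> (\<forall>b\<in>B. \<exists>f\<in>F. dist b f < \<delta>) \<and> (\<forall>f\<in>F. \<exists>b\<in>B. dist f b < \<delta>)"
proof -
  obtain xs where xs: "set xs = F" using finite_list[OF \<open>finite F\<close>] by blast
  \<comment> \<open>listing F three times guarantees at least three points\<close>
  define cs where "cs = xs @ xs @ xs"
  have "length xs > 0" using xs \<open>F \<noteq> {}\<close> by blast
  then have "length cs \<ge> 3" unfolding cs_def length_append by linarith
  have "set cs = F" using xs unfolding cs_def by simp
  obtain B where B: "finite B" "card B = length cs" "weak_sidon B"
      "\<forall>c\<in>set cs. \<exists>b\<in>B. dist c b < \<delta>" "\<forall>b\<in>B. \<exists>c\<in>set cs. dist b c < \<delta>"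
    using weak_sidon_near_list[OF translation_invariant infinite_balls order_refl finite_set \<open>\<delta> > 0\<close>]
    by blast
  have "net_set B" using weak_sidon_imp_net_set[OF B(3,1)] B(2) \<open>length cs \<ge> 3\<close> by simp
  then show ?thesis using B(4,5) unfolding \<open>set cs = F\<close> by blast
qed

lemma translation_mem_spectre: "z \<in> spectre (A \<union> (\<lambda>a. a + z) ` A)"
  unfolding spectre_def by auto

lemma nontrivial_spectre_near_finite:
  fixes F :: "'a::{ab_group_add, metric_space} set"
  assumes translation_invariant: "\<And>x y z :: 'a. dist x y = dist (x + z) (y + z)"
    and infinite_balls: "\<And>(x::'a) r. r > 0 \<Longrightarrow> infinite (ball x r)"
    and "finite F" "F \<noteq> {}" "\<delta> > 0"
  shows "\<exists>A. (finite A \<and> A \<noteq> {} \<and> spectre A \<noteq> {0})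
    \<and> (\<forall>a\<in>A. \<exists>f\<in>F. dist a f < \<delta>) \<and> (\<forall>f\<in>F. \<exists>a\<in>A. dist f a < \<delta>)"
proof -
  obtain z :: 'a where z: "dist 0 z < \<delta>" "z \<notin> {0}"
    using obtain_point_avoiding_finite[of 0 \<delta> "{0}"] infinite_balls \<open>\<delta> > 0\<close> by blast
  define A where "A = F \<union> (\<lambda>f. f + z) ` F"
  have "z \<in> spectre A" unfolding A_def by (rule translation_mem_spectre)
  then have "spectre A \<noteq> {0}" using z(2) by blast
  moreover have "finite A" "A \<noteq> {}" unfolding A_def using \<open>finite F\<close> \<open>F \<noteq> {}\<close> by auto
  moreover have "\<exists>f\<in>F. dist a f < \<delta>" if "a \<in> A" for a
    using that unfolding A_def
  proof
    assume "a \<in> F"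
    then show ?thesis using \<open>\<delta> > 0\<close> by force
  next
    assume "a \<in> (\<lambda>f. f + z) ` F"
    then obtain f where "f \<in> F" "a = f + z" by blast
    moreover have "dist (f + z) f = dist 0 z"
      using translation_invariant[of z 0 f] by (simp add: dist_commute add.commute)
    ultimately have "dist a f < \<delta>" using z(1) by simp
    then show ?thesis using \<open>f \<in> F\<close> by blast
  qed
  moreover have "\<exists>a\<in>A. dist f a < \<delta>" if "f \<in> F" for f
    using that \<open>\<delta> > 0\<close> unfolding A_def by (intro bexI[of _ f]) auto
  ultimately show ?thesis by (intro exI[of _ A]) blast
qed

lemma hausdist_le_via_net:
  fixes A F K :: "'a::metric_space set"
  assumes "F \<subseteq> K" "A \<noteq> {}"
    and net: "\<forall>k\<in>K. \<exists>f\<in>F. dist k f < r"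
    and "\<forall>a\<in>A. \<exists>f\<in>F. dist a f < s" "\<forall>f\<in>F. \<exists>a\<in>A. dist f a < s"
  shows "hausdist A K \<le> r + s"
proof -
  have "K \<noteq> {}" using assms(1,2,4) by blast
  then obtain k where "k \<in> K" by blast
  then obtain f where "dist k f < r" using net by blast
  then have "0 \<le> r" using zero_le_dist[of k f] by linarith
  have "infdist a K \<le> r + s" if "a \<in> A" for a
  proof -
    obtain f where "f \<in> F" "dist a f < s" using assms(4) \<open>a \<in> A\<close> by blast
    then have "infdist a K \<le> dist a f" using assms(1) by (intro infdist_le) auto
    then show ?thesis using \<open>dist a f < s\<close> \<open>0 \<le> r\<close> by linarith
  qed
  moreover have "infdist k A \<le> r + s" if "k \<in> K" for k
  proof -
    obtain f where "f \<in> F" "dist k f < r" using net \<open>k \<in> K\<close> by blast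
    moreover obtain a where "a \<in> A" "dist f a < s" using assms(5) \<open>f \<in> F\<close> by blast
    ultimately have "infdist k A \<le> dist k f + dist f a"
      using infdist_le[of a A k] dist_triangle[of k a f] by linarith
    then show ?thesis using \<open>dist k f < r\<close> \<open>dist f a < s\<close> by linarith
  qed
  ultimately show ?thesis
    unfolding hausdist_def using \<open>A \<noteq> {}\<close> \<open>K \<noteq> {}\<close> by (intro max.boundedI cSUP_least) auto
qed

lemma compact_obtain_finite_net:
  fixes K :: "'a::metric_space set"
  assumes "compact K" "K \<noteq> {}" "r > 0"
  obtains F where "finite F" "F \<noteq> {}" "F \<subseteq> K" "\<forall>k\<in>K. \<exists>f\<in>F. dist k f < r"
proof -
  have "\<exists>F. finite F \<and> F \<subseteq> K \<and> K \<subseteq> (\<Union>f\<in>F. ball f r)"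
    using seq_compact_imp_totally_bounded[OF compact_imp_seq_compact[OF \<open>compact K\<close>]] \<open>r > 0\<close>
    by simp
  then obtain F where F: "finite F" "F \<subseteq> K" "K \<subseteq> (\<Union>f\<in>F. ball f r)"
    by (elim exE conjE)
  have "F \<noteq> {}" using \<open>K \<noteq> {}\<close> F(3) by blast
  moreover have "\<exists>f\<in>F. dist k f < r" if "k \<in> K" for k
  proof -
    obtain f where "f \<in> F" "dist f k < r" using F(3) \<open>k \<in> K\<close> by auto
    then show ?thesis by (metis dist_commute)
  qed
  ultimately show ?thesis using that F(1,2) by blast
qed

lemma hausdist_approximation_from_finite:
  fixes K :: "'a::metric_space set"
  assumes "compact K" "K \<noteq> {}" "\<epsilon> > 0"
    and near: "\<And>F \<delta>. finite F \<Longrightarrow> F \<noteq> {} \<Longrightarrow> \<delta> > 0 \<Longrightarrow>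
      \<exists>A. P A \<and> (\<forall>a\<in>A. \<exists>f\<in>F. dist a f < \<delta>) \<and> (\<forall>f\<in>F. \<exists>a\<in>A. dist f a < \<delta>)"
  shows "\<exists>A. P A \<and> hausdist A K < \<epsilon>"
proof -
  have "\<epsilon> / 3 > 0" using \<open>\<epsilon> > 0\<close> by simp
  then obtain F where F: "finite F" "F \<noteq> {}" "F \<subseteq> K" "\<forall>k\<in>K. \<exists>f\<in>F. dist k f < \<epsilon> / 3"
    by (rule compact_obtain_finite_net[OF \<open>compact K\<close> \<open>K \<noteq> {}\<close>])
  obtain A where A: "P A" "\<forall>a\<in>A. \<exists>f\<in>F. dist a f < \<epsilon> / 3" "\<forall>f\<in>F. \<exists>a\<in>A. dist f a < \<epsilon> / 3"
    using near[OF F(1,2) \<open>\<epsilon> / 3 > 0\<close>] by blast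
  have "A \<noteq> {}" using F(2) A(3) by blast
  then have "hausdist A K \<le> \<epsilon> / 3 + \<epsilon> / 3"
    by (rule hausdist_le_via_net[OF F(3) _ F(4) A(2,3)])
  then show ?thesis using A(1) \<open>\<epsilon> > 0\<close> by (intro exI[of _ A]) simp
qed

theorem lemma3p6:
  fixes dummy :: "'a::{ab_group_add, metric_space}"
  assumes inv: "\<And>x y z :: 'a. dist x y = dist (x + z) (y + z)"
    and balls: "\<And>(x::'a) r. r > 0 \<Longrightarrow> infinite (ball x r)"
  shows "(\<forall>K::'a set. compact K \<and> K \<noteq> {} \<longrightarrow> (\<forall>\<epsilon>>0. \<exists>A. finite A \<and> A \<noteq> {} \<and>
            spectre A \<noteq> {0} \<and> hausdist A K < \<epsilon>))
       \<and> (\<forall>K::'a set. compact K \<and> K \<noteq> {} \<longrightarrow> (\<forall>\<epsilon>>0. \<exists>A. net_set A \<and> hausdist A K < \<epsilon>))"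
proof (intro conjI allI impI; elim conjE)
  fix K :: "'a set" and \<epsilon> :: real
  assume "compact K" "K \<noteq> {}" "\<epsilon> > 0"
  then have "\<exists>A. (finite A \<and> A \<noteq> {} \<and> spectre A \<noteq> {0}) \<and> hausdist A K < \<epsilon>"
    by (rule hausdist_approximation_from_finite) (rule nontrivial_spectre_near_finite[OF inv balls])
  then show "\<exists>A. finite A \<and> A \<noteq> {} \<and> spectre A \<noteq> {0} \<and> hausdist A K < \<epsilon>"
    by (simp only: conj_assoc)
next
  fix K :: "'a set" and \<epsilon> :: real
  assume "compact K" "K \<noteq> {}" "\<epsilon> > 0"
  then show "\<exists>A. net_set A \<and> hausdist A K < \<epsilon>"
    by (rule hausdist_approximation_from_finite) (rule net_set_near_finite[OF inv balls])
qed

end
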